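(* Let $(x,q)\in\mathbf J$. Then: (i) for each positive integer $m$ there exists a neighborhood $\mathbf W\subset\mathbb R^2$ of $(x,q)$ such that $a_1(y,r)\ldots a_m(y,r)\ge a_1(x,q)\ldots a_m(x,q)$ (lexicographically) for all $(y,r)\in\mathbf W\cap\mathbf J$; (ii) if $(y_n,r_n)$ is a sequence in $\mathbf J$ converging to $(x,q)$ from below (i.e. $y_n\le x$ and $r_n\le q$ for all $n$), then the sequences $(a_i(y_n,r_n))_{i\ge1}$ converge coordinate-wise to $(a_i(x,q))_{i\ge1}$ as $n\to\infty$.
   Context: For real $q>1$ let $\lceil q\rceil$ be the smallest integer $\ge q$ and $A_q=\{0,\ldots,\lceil q\rceil-1\}$. Let $\mathbf J$ be the set of $(x,q)$ with $q>1$ and $x\in J_q:=[0,(\lceil q\rceil-1)/(q-1)]$ (equivalently, $x=\sum_{i\ge1}c_iq^{-i}$ for some digits $c_i\in A_q$). For $(x,q)\in\mathbf J$, the quasi-greedy expansion $(a_i(x,q))$ is: $0^\infty$ if $x=0$; if $x>0$, recursively $a_n(x,q)$ is the largest element of $A_q$ with $\sum_{i=1}^n a_i(x,q)q^{-i}<x$. Finite words of equal length are compared lexicographically. *)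

theory Defs
  imports "HOL-Analysis.Analysis"
begin

definition JJ :: "(real \<times> real) set" where
  "JJ = {(x, q). q > 1 \<and> 0 \<le> x \<and> x \<le> (real_of_int \<lceil>q\<rceil> - 1) / (q - 1)}"

text \<open>First n digits a_1 ... a_n of the quasi-greedy expansion of x in base q
  (list index k holds a_(k+1)). Digits range over A_q = {0, ..., ceil q - 1}.\<close>
fun qg_prefix :: "real \<Rightarrow> real \<Rightarrow> nat \<Rightarrow> nat list" where
  "qg_prefix x q 0 = []"
| "qg_prefix x q (Suc n) =
     (let w = qg_prefix x q n;
          s = (\<Sum>i<n. real (w ! i) / q ^ (i + 1))
      in w @ [if x = 0 then 0
              else (GREATEST d::nat. real d \<le> real_of_int \<lceil>q\<rceil> - 1 \<and>
                                     s + real d / q ^ (n + 1) < x)])"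

definition qg_digit :: "real \<Rightarrow> real \<Rightarrow> nat \<Rightarrow> nat" where
  "qg_digit x q i = last (qg_prefix x q i)"

end

theory Submission
  imports Defs
begin

text \<open>The quasi-greedy digit after a prefix is the largest admissible digit, and admissibility
  is an open condition in \<open>(x, q)\<close> (a strict inequality between continuous functions) that is
  monotone under decreasing \<open>x\<close> and \<open>q\<close>. Openness shows that a nearby pair admits every digit
  of the prefix of \<open>(x, q)\<close>, so its own quasi-greedy prefix, being lexicographically maximal
  among admissible words, is at least as large. Along a sequence approaching from below, the
  digits of \<open>(x, q)\<close> are eventually admissible, while monotonicity forbids larger ones; by
  induction on the position the prefixes eventually coincide.\<close>

definition qg_value :: "nat list \<Rightarrow> real \<Rightarrow> nat \<Rightarrow> real" where
  "qg_value w r n = (\<Sum>i<n. real (w ! i) / r ^ (i + 1))"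

definition qg_admissible :: "real \<Rightarrow> real \<Rightarrow> nat list \<Rightarrow> nat \<Rightarrow> nat \<Rightarrow> bool" where
  "qg_admissible x q w n d \<longleftrightarrow>
     real d \<le> real_of_int \<lceil>q\<rceil> - 1 \<and> qg_value w q n + real d / q ^ (n + 1) < x"

definition qg_next :: "real \<Rightarrow> real \<Rightarrow> nat list \<Rightarrow> nat \<Rightarrow> nat" where
  "qg_next x q w n = (if x = 0 then 0 else (GREATEST d. qg_admissible x q w n d))"

lemma qg_prefix_Suc: "qg_prefix x q (Suc n) = qg_prefix x q n @ [qg_next x q (qg_prefix x q n) n]"
  by (simp add: qg_next_def qg_admissible_def[abs_def] qg_value_def Let_def)

declare qg_prefix.simps(2)[simp del]

lemma length_qg_prefix [simp]: "length (qg_prefix x q n) = n"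
  by (induction n) (auto simp: qg_prefix_Suc)

lemma nth_qg_prefix: "i < n \<Longrightarrow> qg_prefix x q n ! i = qg_next x q (qg_prefix x q i) i"
  by (induction n) (auto simp: qg_prefix_Suc nth_append less_Suc_eq)

lemma map_qg_digit_upt: "map (qg_digit x q) [1..<m+1] = qg_prefix x q m"
  by (rule nth_equalityI)
    (auto simp: qg_digit_def qg_prefix_Suc nth_qg_prefix simp del: upt_Suc)

lemma qg_prefix_zero: "qg_prefix 0 q n = replicate n 0"
  by (induction n) (auto simp: qg_prefix_Suc qg_next_def replicate_append_same[symmetric])

lemma qg_value_snoc:
  "length w = n \<Longrightarrow> qg_value (w @ [d]) r (Suc n) = qg_value w r n + real d / r ^ Suc n"
  by (simp add: qg_value_def nth_append)

lemma qg_value_nonneg: "0 < r \<Longrightarrow> 0 \<le> qg_value w r n"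
  unfolding qg_value_def by (intro sum_nonneg) auto

lemma qg_value_antimono_base: "0 < r \<Longrightarrow> r \<le> q \<Longrightarrow> qg_value w q n \<le> qg_value w r n"
  unfolding qg_value_def by (intro sum_mono divide_left_mono power_mono mult_pos_pos) auto

lemma qg_admissible_zero: "0 < q \<Longrightarrow> qg_value w q n < x \<Longrightarrow> qg_admissible x q w n 0"
  unfolding qg_admissible_def by (simp; linarith)

lemma qg_admissible_mono:
  assumes "0 < r" "r \<le> q" "y \<le> x" "qg_admissible y r w n d"
  shows "qg_admissible x q w n d"
proof -
  have "\<lceil>r\<rceil> \<le> \<lceil>q\<rceil>" using assms(2) by (rule ceiling_mono)
  moreover have "qg_value w q n \<le> qg_value w r n"
    using assms(1,2) by (rule qg_value_antimono_base)
  moreover have "real d / q ^ (n + 1) \<le> real d / r ^ (n + 1)"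
    using assms(1,2) by (intro divide_left_mono power_mono mult_pos_pos) auto
  ultimately show ?thesis using assms(3,4) unfolding qg_admissible_def by linarith
qed

lemma qg_next_greatest:
  assumes "x \<noteq> 0" "qg_admissible x q w n d"
  shows "qg_admissible x q w n (qg_next x q w n)" "d \<le> qg_next x q w n"
proof -
  have "\<forall>d. qg_admissible x q w n d \<longrightarrow> d \<le> nat \<lceil>q\<rceil>"
    unfolding qg_admissible_def by linarith
  then show "qg_admissible x q w n (qg_next x q w n)" "d \<le> qg_next x q w n"
    using assms unfolding qg_next_def by (auto intro: GreatestI_nat Greatest_le_nat)
qed

lemma qg_next_admissible:
  assumes "0 < q" "qg_value w q n < x"
  shows "qg_admissible x q w n (qg_next x q w n)"
proof -
  have "x \<noteq> 0" using qg_value_nonneg[OF assms(1), of w n] assms(2) by auto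
  then show ?thesis using qg_next_greatest(1) qg_admissible_zero[OF assms] by blast
qed

lemma qg_value_qg_prefix_less: "0 < q \<Longrightarrow> 0 < x \<Longrightarrow> qg_value (qg_prefix x q n) q n < x"
proof (induction n)
  case 0
  then show ?case by (simp add: qg_value_def)
next
  case (Suc n)
  then have "qg_admissible x q (qg_prefix x q n) n (qg_next x q (qg_prefix x q n) n)"
    by (intro qg_next_admissible) auto
  then show ?case by (simp add: qg_prefix_Suc qg_value_snoc qg_admissible_def)
qed

lemma qg_prefix_digit_le:
  "0 < q \<Longrightarrow> 0 < x \<Longrightarrow> i < n \<Longrightarrow> real (qg_prefix x q n ! i) \<le> real_of_int \<lceil>q\<rceil> - 1"
  using qg_next_admissible[OF _ qg_value_qg_prefix_less, of q x i]
  by (simp add: nth_qg_prefix qg_admissible_def)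

lemma lexordp_eq_replicate_zero: "length l = m \<Longrightarrow> lexordp_eq (replicate m (0::nat)) l"
  by (induction m arbitrary: l) (auto simp: length_Suc_conv)

lemma lexordp_append_same_length:
  "ord_class.lexordp xs ys \<Longrightarrow> length xs = length ys \<Longrightarrow> ord_class.lexordp (xs @ us) (ys @ vs)"
proof (induction xs arbitrary: ys)
  case Nil
  then show ?case by simp
next
  case (Cons a xs)
  then show ?case by (cases ys) auto
qed

lemma lexordp_eq_snoc_mono: "c \<le> (d::'a::order) \<Longrightarrow> lexordp_eq (w @ [c]) (w @ [d])"
  by (induction w) (auto simp: less_le_not_le)

lemma lexordp_eq_qg_prefix:
  assumes "0 < r"
  shows "length b = k \<Longrightarrow> (\<forall>i<k. real (b ! i) \<le> real_of_int \<lceil>r\<rceil> - 1) \<Longrightarrow> qg_value b r k < y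
     \<Longrightarrow> lexordp_eq b (qg_prefix y r k)"
proof (induction k arbitrary: b)
  case 0
  then show ?case by simp
next
  case (Suc k)
  let ?w = "qg_prefix y r k"
  obtain b' c where b: "b = b' @ [c]" and len_b': "length b' = k"
    using Suc.prems(1) by (metis length_Suc_conv_rev)
  have value_b: "qg_value b r (Suc k) = qg_value b' r k + real c / r ^ Suc k"
    using b len_b' by (simp add: qg_value_snoc)
  have "lexordp_eq b' ?w"
  proof (rule Suc.IH[OF len_b'])
    show "\<forall>i<k. real (b' ! i) \<le> real_of_int \<lceil>r\<rceil> - 1"
      using Suc.prems(2) b len_b' by (metis less_SucI nth_append)
    have "0 \<le> real c / r ^ Suc k" using assms by simp
    then show "qg_value b' r k < y" using value_b Suc.prems(3) by linarith
  qed
  then consider "b' = ?w" | "ord_class.lexordp b' ?w" by (auto simp: lexordp_eq_conv_lexord)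
  then show ?case
  proof cases
    case 1
    have "y \<noteq> 0" using qg_value_nonneg[OF assms, of b "Suc k"] Suc.prems(3) by auto
    moreover have "qg_admissible y r ?w k c"
      using 1 b value_b Suc.prems(2,3) by (auto simp: qg_admissible_def nth_append)
    ultimately have "c \<le> qg_next y r ?w k" by (rule qg_next_greatest)
    then show ?thesis using 1 b by (simp add: qg_prefix_Suc lexordp_eq_snoc_mono)
  next
    case 2
    then show ?thesis
      using b len_b' by (simp add: qg_prefix_Suc lexordp_append_same_length lexordp_into_lexordp_eq)
  qed
qed

lemma qg_prefix_locally_lexordp_eq:
  assumes "0 < q" "0 \<le> x"
  shows "\<exists>W. open W \<and> (x, q) \<in> W \<and>
           (\<forall>(y, r)\<in>W. lexordp_eq (qg_prefix x q m) (qg_prefix y r m))"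
proof (cases "x = 0")
  case True
  then show ?thesis by (intro exI[of _ UNIV]) (auto simp: qg_prefix_zero lexordp_eq_replicate_zero)
next
  case False
  then have "0 < x" using assms(2) by simp
  define a where "a = qg_prefix x q m"
  define T where "T = {p :: real \<times> real. real_of_int \<lceil>q\<rceil> - 1 < snd p}"
  define W where "W = T \<inter> (\<lambda>p. fst p - qg_value a (snd p) m) -` {0<..}"
  have ceiling_pos: "0 \<le> real_of_int \<lceil>q\<rceil> - 1" using assms(1) by simp
  have "continuous_on T (\<lambda>p. fst p - qg_value a (snd p) m)"
    unfolding qg_value_def using ceiling_pos by (intro continuous_intros) (auto simp: T_def)
  moreover have "open T" unfolding T_def by (intro open_Collect_less continuous_intros)
  ultimately have "open W" unfolding W_def by (rule continuous_open_preimage) simp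
  moreover have "(x, q) \<in> W"
    using qg_value_qg_prefix_less[OF assms(1) \<open>0 < x\<close>] ceiling_correct[of q]
    by (auto simp: W_def T_def a_def)
  moreover have "lexordp_eq a (qg_prefix y r m)" if "(y, r) \<in> W" for y r
  proof -
    have r: "real_of_int \<lceil>q\<rceil> - 1 < r" and value_a: "qg_value a r m < y"
      using that by (auto simp: W_def T_def)
    have "\<lceil>q\<rceil> \<le> \<lceil>r\<rceil>" using r by (simp add: le_ceiling_iff)
    then have "\<forall>i<m. real (a ! i) \<le> real_of_int \<lceil>r\<rceil> - 1"
      using qg_prefix_digit_le[OF assms(1) \<open>0 < x\<close>] by (force simp: a_def)
    then show ?thesis
      using lexordp_eq_qg_prefix[of r a m y] r ceiling_pos value_a by (simp add: a_def)
  qed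
  ultimately show ?thesis by (auto simp: a_def)
qed

lemma qg_next_eventually_eq_from_below:
  assumes "0 < q" "qg_value w q k < x"
    and "\<And>n. ys n \<le> x" "\<And>n. rs n \<le> q" "ys \<longlonglongrightarrow> x" "rs \<longlonglongrightarrow> q"
  shows "\<forall>\<^sub>F n in sequentially. qg_next (ys n) (rs n) w k = qg_next x q w k"
proof -
  define a where "a = qg_next x q w k"
  have "0 < x" using qg_value_nonneg[OF assms(1), of w k] assms(2) by linarith
  have admissible_a: "qg_admissible x q w k a"
    unfolding a_def using assms(1,2) by (rule qg_next_admissible)
  have "\<forall>\<^sub>F n in sequentially. 0 < ys n" using assms(5) \<open>0 < x\<close> by (rule order_tendstoD)
  moreover have "\<forall>\<^sub>F n in sequentially. real_of_int \<lceil>q\<rceil> - 1 < rs n"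
    using assms(6) ceiling_correct[of q] by (intro order_tendstoD) auto
  moreover have "\<forall>\<^sub>F n in sequentially. qg_value w (rs n) k + real a / rs n ^ (k+1) < ys n"
  proof -
    have "(\<lambda>n. ys n - (qg_value w (rs n) k + real a / rs n ^ (k+1)))
            \<longlonglongrightarrow> x - (qg_value w q k + real a / q ^ (k+1))"
      unfolding qg_value_def using assms(1) by (intro tendsto_intros assms(5,6)) auto
    moreover have "0 < x - (qg_value w q k + real a / q ^ (k+1))"
      using admissible_a by (simp add: qg_admissible_def)
    ultimately have "\<forall>\<^sub>F n in sequentially. 0 < ys n - (qg_value w (rs n) k + real a / rs n ^ (k+1))"
      by (rule order_tendstoD(1))
    then show ?thesis by eventually_elim simp
  qed
  ultimately show ?thesis
  proof eventually_elim
    case (elim n)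
    have "1 \<le> real_of_int \<lceil>q\<rceil>" using assms(1) by simp
    then have "0 < rs n" using elim by linarith
    have "\<lceil>q\<rceil> \<le> \<lceil>rs n\<rceil>" using elim by (simp add: le_ceiling_iff)
    then have "qg_admissible (ys n) (rs n) w k a"
      using elim admissible_a by (auto simp: qg_admissible_def)
    with elim have "qg_admissible (ys n) (rs n) w k (qg_next (ys n) (rs n) w k)"
      and "a \<le> qg_next (ys n) (rs n) w k"
      by (auto intro: qg_next_greatest)
    moreover have "qg_next (ys n) (rs n) w k \<le> a"
      unfolding a_def using calculation(1) \<open>0 < x\<close>
      by (intro qg_next_greatest(2) qg_admissible_mono[OF \<open>0 < rs n\<close> assms(4,3)]) auto
    ultimately show ?case by (simp add: a_def)
  qed
qed

lemma qg_prefix_eventually_eq_from_below: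
  assumes "0 < q" "\<And>n. 0 \<le> ys n" "\<And>n. ys n \<le> x" "\<And>n. rs n \<le> q"
    and "ys \<longlonglongrightarrow> x" "rs \<longlonglongrightarrow> q"
  shows "\<forall>\<^sub>F n in sequentially. qg_prefix (ys n) (rs n) k = qg_prefix x q k"
proof (cases "x = 0")
  case True
  then have "ys n = 0" for n using assms(2,3)[of n] by linarith
  then show ?thesis using True by (simp add: qg_prefix_zero)
next
  case False
  then have "0 < x" using assms(2,3)[of 0] by linarith
  show ?thesis
  proof (induction k)
    case 0
    then show ?case by simp
  next
    case (Suc k)
    have "\<forall>\<^sub>F n in sequentially.
            qg_next (ys n) (rs n) (qg_prefix x q k) k = qg_next x q (qg_prefix x q k) k"
      using assms \<open>0 < x\<close> by (intro qg_next_eventually_eq_from_below qg_value_qg_prefix_less)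
    with Suc.IH show ?case by eventually_elim (simp add: qg_prefix_Suc)
  qed
qed

theorem lemma2p3:
  fixes x q :: real
  assumes "(x, q) \<in> JJ"
  shows "(\<forall>m::nat. m \<ge> 1 \<longrightarrow>
            (\<exists>W :: (real \<times> real) set. open W \<and> (x, q) \<in> W \<and>
               (\<forall>y r. (y, r) \<in> W \<inter> JJ \<longrightarrow>
                   lexordp_eq (map (qg_digit x q) [1..<m+1]) (map (qg_digit y r) [1..<m+1]))))
       \<and> (\<forall>(ys :: nat \<Rightarrow> real) (rs :: nat \<Rightarrow> real).
            (\<forall>n. (ys n, rs n) \<in> JJ \<and> ys n \<le> x \<and> rs n \<le> q) \<and>
            ys \<longlonglongrightarrow> x \<and> rs \<longlonglongrightarrow> q \<longrightarrow>
            (\<forall>i::nat. i \<ge> 1 \<longrightarrow>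
               (\<lambda>n. real (qg_digit (ys n) (rs n) i)) \<longlonglongrightarrow> real (qg_digit x q i)))"
proof (intro conjI allI impI)
  have q: "0 < q" and x: "0 \<le> x" using assms by (auto simp: JJ_def)
  fix m :: nat
  show "\<exists>W. open W \<and> (x, q) \<in> W \<and> (\<forall>y r. (y, r) \<in> W \<inter> JJ \<longrightarrow>
          lexordp_eq (map (qg_digit x q) [1..<m+1]) (map (qg_digit y r) [1..<m+1]))"
    unfolding map_qg_digit_upt using qg_prefix_locally_lexordp_eq[OF q x, of m] by auto
next
  have q: "0 < q" using assms by (auto simp: JJ_def)
  fix ys rs :: "nat \<Rightarrow> real" and i :: nat
  assume seq: "(\<forall>n. (ys n, rs n) \<in> JJ \<and> ys n \<le> x \<and> rs n \<le> q) \<and> ys \<longlonglongrightarrow> x \<and> rs \<longlonglongrightarrow> q"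
  then have "\<forall>\<^sub>F n in sequentially. qg_prefix (ys n) (rs n) i = qg_prefix x q i"
    by (intro qg_prefix_eventually_eq_from_below q) (auto simp: JJ_def)
  then have "\<forall>\<^sub>F n in sequentially. real (qg_digit (ys n) (rs n) i) = real (qg_digit x q i)"
    by eventually_elim (simp add: qg_digit_def)
  then show "(\<lambda>n. real (qg_digit (ys n) (rs n) i)) \<longlonglongrightarrow> real (qg_digit x q i)"
    by (rule tendsto_eventually)
qed

end
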